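(* Let $f:\mathbb{R}^p\to\mathbb{R}$ be convex and twice continuously differentiable, let $g_1,\dots,g_r:\mathbb{R}^p\to\mathbb{R}$ be affine, and let $h_1,\dots,h_s:\mathbb{R}^p\to\mathbb{R}$ be convex and twice continuously differentiable. For $\rho\ge 0$ put $$\mathcal{E}_\rho(\mathbf{x})=f(\mathbf{x})+\rho\sum_{i=1}^r|g_i(\mathbf{x})|+\rho\sum_{j=1}^s\max\{0,h_j(\mathbf{x})\}.$$ 1. (Uniqueness) If $\mathcal{E}_\rho$ is strictly convex, then it has at most one minimizer. 2. (Continuity) Let $\rho_0>0$. If there is an open interval $I\ni\rho_0$ of nonnegative numbers such that $\mathcal{E}_\rho$ is strictly convex and coercive for every $\rho\in I$, then for every $\rho\in I$ the function $\mathcal{E}_\rho$ has a unique minimizer $\mathbf{x}(\rho)$, and the map $\rho\mapsto\mathbf{x}(\rho)$ is continuous at $\rho_0$. 3. (Continuity of coefficients) Suppose in addition to the hypotheses of part 2 that for every $\rho\in I$ the vectors $\{\nabla g_i(\mathbf{x}(\rho)): g_i(\mathbf{x}(\rho))=0\}\cup\{\nabla h_j(\mathbf{x}(\rho)): h_j(\mathbf{x}(\rho))=0\}$ are linearly independent. Then for every $\rho\in I$ there is a unique coefficient vector $(s_1(\rho),\dots,s_r(\rho),t_1(\rho),\dots,t_s(\rho))$ satisfying the optimality condition below at $\mathbf{x}=\mathbf{x}(\rho)$, and the maps $\rho\mapsto s_i(\rho)$ and $\rho\mapsto t_j(\rho)$ are continuous at $\rho_0$.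
   Context: Optimality condition: for $\rho>0$ and $\mathbf{x}\in\mathbb{R}^p$, coefficients $s_i,t_j$ satisfy the optimality condition at $\mathbf{x}$ if $$\mathbf{0}=\nabla f(\mathbf{x})+\rho\sum_{i=1}^r s_i\nabla g_i(\mathbf{x})+\rho\sum_{j=1}^s t_j\nabla h_j(\mathbf{x}),$$ where $s_i=-1$ if $g_i(\mathbf{x})<0$, $s_i\in[-1,1]$ if $g_i(\mathbf{x})=0$, $s_i=1$ if $g_i(\mathbf{x})>0$, and $t_j=0$ if $h_j(\mathbf{x})<0$, $t_j\in[0,1]$ if $h_j(\mathbf{x})=0$, $t_j=1$ if $h_j(\mathbf{x})>0$. (A point $\mathbf{x}$ minimizes $\mathcal{E}_\rho$ iff such coefficients exist.) A function is coercive if it tends to $+\infty$ as $\|\mathbf{x}\|\to\infty$. *)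

theory Defs
  imports "HOL-Analysis.Analysis"
begin

definition strictly_convex_on :: "'a::real_vector set \<Rightarrow> ('a \<Rightarrow> real) \<Rightarrow> bool" where
  "strictly_convex_on S f \<longleftrightarrow> convex S \<and>
     (\<forall>x\<in>S. \<forall>y\<in>S. x \<noteq> y \<longrightarrow>
        (\<forall>u::real. 0 < u \<and> u < 1 \<longrightarrow> f ((1 - u) *\<^sub>R x + u *\<^sub>R y) < (1 - u) * f x + u * f y))"

definition twice_cont_diff :: "('a::euclidean_space \<Rightarrow> real) \<Rightarrow> bool" where
  "twice_cont_diff f \<longleftrightarrow>
     (\<exists>(G :: 'a \<Rightarrow> 'a \<Rightarrow>\<^sub>L real) (H :: 'a \<Rightarrow> 'a \<Rightarrow>\<^sub>L ('a \<Rightarrow>\<^sub>L real)).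
        (\<forall>x. (f has_derivative blinfun_apply (G x)) (at x)) \<and>
        (\<forall>x. (G has_derivative blinfun_apply (H x)) (at x)) \<and>
        continuous_on UNIV H)"

definition affine_fun :: "('a::real_inner \<Rightarrow> real) \<Rightarrow> bool" where
  "affine_fun g \<longleftrightarrow> (\<exists>a b. \<forall>x. g x = inner a x + b)"

definition grad :: "('a::real_inner \<Rightarrow> real) \<Rightarrow> 'a \<Rightarrow> 'a" where
  "grad f x = (THE D. GDERIV f x :> D)"

definition coercive :: "('a::real_normed_vector \<Rightarrow> real) \<Rightarrow> bool" where
  "coercive F \<longleftrightarrow> filterlim F at_top at_infinity"

definition is_minimizer :: "('a \<Rightarrow> real) \<Rightarrow> 'a \<Rightarrow> bool" where
  "is_minimizer F x \<longleftrightarrow> (\<forall>z. F x \<le> F z)"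

definition penE :: "('a \<Rightarrow> real) \<Rightarrow> (nat \<Rightarrow> 'a \<Rightarrow> real) \<Rightarrow> nat \<Rightarrow> (nat \<Rightarrow> 'a \<Rightarrow> real) \<Rightarrow> nat
     \<Rightarrow> real \<Rightarrow> 'a \<Rightarrow> real" where
  "penE f g r h s \<rho> x = f x + \<rho> * (\<Sum>i<r. \<bar>g i x\<bar>) + \<rho> * (\<Sum>j<s. max 0 (h j x))"

definition opt_cond :: "('a::real_inner \<Rightarrow> real) \<Rightarrow> (nat \<Rightarrow> 'a \<Rightarrow> real) \<Rightarrow> nat
     \<Rightarrow> (nat \<Rightarrow> 'a \<Rightarrow> real) \<Rightarrow> nat \<Rightarrow> real \<Rightarrow> 'a \<Rightarrow> (nat \<Rightarrow> real) \<Rightarrow> (nat \<Rightarrow> real) \<Rightarrow> bool" where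
  "opt_cond f g r h s \<rho> x sc tc \<longleftrightarrow>
     grad f x + \<rho> *\<^sub>R (\<Sum>i<r. sc i *\<^sub>R grad (g i) x) + \<rho> *\<^sub>R (\<Sum>j<s. tc j *\<^sub>R grad (h j) x) = 0 \<and>
     (\<forall>i<r. (g i x < 0 \<longrightarrow> sc i = -1) \<and> (g i x = 0 \<longrightarrow> -1 \<le> sc i \<and> sc i \<le> 1) \<and>
            (g i x > 0 \<longrightarrow> sc i = 1)) \<and>
     (\<forall>j<s. (h j x < 0 \<longrightarrow> tc j = 0) \<and> (h j x = 0 \<longrightarrow> 0 \<le> tc j \<and> tc j \<le> 1) \<and>
            (h j x > 0 \<longrightarrow> tc j = 1))"

definition active_grads_indep :: "(nat \<Rightarrow> 'a::real_inner \<Rightarrow> real) \<Rightarrow> nat \<Rightarrow> (nat \<Rightarrow> 'a \<Rightarrow> real) \<Rightarrow> nat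
     \<Rightarrow> 'a \<Rightarrow> bool" where
  "active_grads_indep g r h s x \<longleftrightarrow>
     (let A = Inl ` {i. i < r \<and> g i x = 0} \<union> Inr ` {j. j < s \<and> h j x = 0};
          V = (\<lambda>k. case k of Inl i \<Rightarrow> grad (g i) x | Inr j \<Rightarrow> grad (h j) x)
      in inj_on V A \<and> independent (V ` A))"

end

(*
  For continuity write
  E_rho = E_rho0 + (rho - rho0) P with P continuous: E_rho0 exceeds its minimum by some
  delta > 0 on a small sphere around x(rho0), this gap survives for rho close to rho0, and
  convexity of E_rho then traps its minimizer inside the sphere.

  At a minimizer every one-sided directional derivative of E_rho is nonnegative. In direction d
  it equals grad f . d + rho * sum_k max (lo_k * (grad c_k . d)) (hi_k * (grad c_k . d)), where
  c_k runs through the g_i and h_j and [lo_k, hi_k] is the subdifferential of the k-th penalty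
  at c_k(x). This is the support function of the set of vectors grad f + rho * sum_k a_k grad
  c_k with a_k in [lo_k, hi_k]; hence 0 lies in this compact convex set, since otherwise a
  separating hyperplane would violate the inequality, and this yields the coefficients.
  Coefficients of inactive constraints are forced by the sign of the constraint, hence locally
  constant in rho; pairing the optimality condition with a dual basis of the independent active
  gradients expresses each remaining coefficient as a continuous function of rho plus an error
  of size at most sum_k |a_k| times the motion of the gradients, where |a_k| <= 1.
*)
theory Submission
  imports Defs
begin

lemma grad_eqI:
  fixes \<phi> :: "'a::real_inner \<Rightarrow> real"
  assumes "GDERIV \<phi> x :> D"
  shows "grad \<phi> x = D"
  unfolding grad_def
proof (rule the_equality[where P="\<lambda>D. GDERIV \<phi> x :> D", OF assms])
  fix D' assume "GDERIV \<phi> x :> D'"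
  then have "(\<lambda>h. h \<bullet> D') = (\<lambda>h. h \<bullet> D)"
    using assms unfolding gderiv_def by (rule has_derivative_unique)
  then have "(D' - D) \<bullet> D' = (D' - D) \<bullet> D" by metis
  then have "(D' - D) \<bullet> (D' - D) = 0" by (simp add: inner_diff_right)
  then show "D' = D" by simp
qed

lemma linear_eq_inner_sum_Basis:
  fixes L :: "'a::euclidean_space \<Rightarrow> real"
  assumes "linear L"
  shows "L y = y \<bullet> (\<Sum>b\<in>Basis. L b *\<^sub>R b)"
proof -
  have "L y = L (\<Sum>b\<in>Basis. (y \<bullet> b) *\<^sub>R b)" by (simp add: euclidean_representation)
  also have "\<dots> = (\<Sum>b\<in>Basis. (y \<bullet> b) * L b)"
    using assms by (simp add: linear_sum linear_scale)
  also have "\<dots> = y \<bullet> (\<Sum>b\<in>Basis. L b *\<^sub>R b)"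
    by (simp add: inner_sum_right mult.commute)
  finally show ?thesis .
qed

definition has_continuous_grad :: "('a::real_inner \<Rightarrow> real) \<Rightarrow> bool" where
  "has_continuous_grad \<phi> \<longleftrightarrow> (\<forall>x. GDERIV \<phi> x :> grad \<phi> x) \<and> continuous_on UNIV (grad \<phi>)"

lemma has_continuous_grad_imp_isCont:
  "has_continuous_grad \<phi> \<Longrightarrow> isCont \<phi> x"
  unfolding has_continuous_grad_def gderiv_def by (blast intro: has_derivative_continuous)

lemma has_continuous_grad_imp_continuous_on:
  "has_continuous_grad \<phi> \<Longrightarrow> continuous_on UNIV \<phi>"
  by (simp add: continuous_at_imp_continuous_on has_continuous_grad_imp_isCont)

lemma has_continuous_grad_imp_isCont_grad:
  "has_continuous_grad \<phi> \<Longrightarrow> isCont (grad \<phi>) x"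
  unfolding has_continuous_grad_def by (simp add: continuous_on_eq_continuous_at)

lemma twice_cont_diff_imp_has_continuous_grad:
  fixes \<phi> :: "'a::euclidean_space \<Rightarrow> real"
  assumes "twice_cont_diff \<phi>"
  shows "has_continuous_grad \<phi>"
proof -
  obtain G :: "'a \<Rightarrow> 'a \<Rightarrow>\<^sub>L real" and H :: "'a \<Rightarrow> 'a \<Rightarrow>\<^sub>L ('a \<Rightarrow>\<^sub>L real)" where
    G: "\<And>x. (\<phi> has_derivative blinfun_apply (G x)) (at x)" and
    H: "\<And>x. (G has_derivative blinfun_apply (H x)) (at x)"
    using assms unfolding twice_cont_diff_def by blast
  define \<gamma> where "\<gamma> x = (\<Sum>b\<in>Basis. G x b *\<^sub>R b)" for x
  have "GDERIV \<phi> x :> \<gamma> x" for x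
  proof -
    have "blinfun_apply (G x) = (\<lambda>y. y \<bullet> \<gamma> x)"
      unfolding \<gamma>_def
      by (intro ext linear_eq_inner_sum_Basis bounded_linear.linear blinfun.bounded_linear_right)
    then show ?thesis using G unfolding gderiv_def by metis
  qed
  then have "grad \<phi> = \<gamma>" by (intro ext grad_eqI)
  moreover have "continuous_on UNIV \<gamma>"
  proof -
    have "continuous_on UNIV G"
      using H by (meson has_derivative_continuous continuous_at_imp_continuous_on)
    then show ?thesis unfolding \<gamma>_def by (intro continuous_intros) auto
  qed
  ultimately show ?thesis
    unfolding has_continuous_grad_def using \<open>\<And>x. GDERIV \<phi> x :> \<gamma> x\<close> by simp
qed

lemma affine_fun_imp_has_continuous_grad:
  assumes "affine_fun \<phi>"
  shows "has_continuous_grad \<phi>"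
proof -
  obtain a b where \<phi>: "\<phi> = (\<lambda>x. a \<bullet> x + b)"
    using assms unfolding affine_fun_def by blast
  have "GDERIV \<phi> x :> a" for x
    unfolding gderiv_def \<phi> by (auto intro!: derivative_eq_intros simp: inner_commute)
  moreover from this have "grad \<phi> = (\<lambda>_. a)" by (intro ext grad_eqI)
  ultimately show ?thesis unfolding has_continuous_grad_def by simp
qed

section \<open>Penalties and their one-sided directional derivatives\<close>

(* Constraints are indexed by Inl i for g_i and Inr j for h_j, penalized by |.| and max 0
   respectively. [subdiff_lo k y, subdiff_hi k y] is the subdifferential of penalty k at y,
   i.e. the range the optimality condition allows for s_i resp. t_j. *)
definition penalty :: "'i + 'j \<Rightarrow> real \<Rightarrow> real" where
  "penalty k y = (case k of Inl _ \<Rightarrow> \<bar>y\<bar> | Inr _ \<Rightarrow> max 0 y)"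

definition subdiff_lo :: "'i + 'j \<Rightarrow> real \<Rightarrow> real" where
  "subdiff_lo k y = (case k of Inl _ \<Rightarrow> if 0 < y then 1 else -1 | Inr _ \<Rightarrow> if 0 < y then 1 else 0)"

definition subdiff_hi :: "'i + 'j \<Rightarrow> real \<Rightarrow> real" where
  "subdiff_hi k y = (case k of Inl _ \<Rightarrow> if y < 0 then -1 else 1 | Inr _ \<Rightarrow> if y < 0 then 0 else 1)"

lemma subdiff_lo_le_hi: "subdiff_lo k y \<le> subdiff_hi k y"
  by (cases k) (auto simp: subdiff_lo_def subdiff_hi_def)

lemma subdiff_bounded: "-1 \<le> subdiff_lo k y" "subdiff_hi k y \<le> 1"
  by (cases k; auto simp: subdiff_lo_def subdiff_hi_def)+

lemma subdiff_hi_eq_lo: "y \<noteq> 0 \<Longrightarrow> subdiff_hi k y = subdiff_lo k y"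
  by (cases k) (auto simp: subdiff_lo_def subdiff_hi_def)

lemma subdiff_lo_same_sign: "0 < y * y' \<Longrightarrow> subdiff_lo k y' = subdiff_lo k y"
  by (cases k) (auto simp: subdiff_lo_def zero_less_mult_iff)

lemma penalty_diff_same_sign:
  assumes "0 < y * y'"
  shows "penalty k y' - penalty k y = subdiff_lo k y * (y' - y)"
  using assms by (cases k) (auto simp: penalty_def subdiff_lo_def zero_less_mult_iff)

lemma penalty_eq_max_subdiff_0: "penalty k y = max (subdiff_lo k 0 * y) (subdiff_hi k 0 * y)"
  by (cases k) (auto simp: penalty_def subdiff_lo_def subdiff_hi_def)

lemma continuous_on_penalty [continuous_intros]:
  "continuous_on S \<phi> \<Longrightarrow> continuous_on S (\<lambda>x. penalty k (\<phi> x))"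
  by (cases k) (simp_all add: penalty_def continuous_intros)

lemma tendsto_same_sign:
  fixes f :: "'b \<Rightarrow> real"
  assumes "(f \<longlongrightarrow> l) F" and "l \<noteq> 0"
  shows "eventually (\<lambda>x. 0 < l * f x) F"
proof -
  have "((\<lambda>x. l * f x) \<longlongrightarrow> l * l) F" using assms(1) by (intro tendsto_mult tendsto_const)
  moreover have "0 < l * l" using assms(2) by (metis not_real_square_gt_zero)
  ultimately show ?thesis by (rule order_tendstoD)
qed

lemma gderiv_tendsto_dir_quotient:
  fixes \<phi> :: "'a::real_inner \<Rightarrow> real"
  assumes "GDERIV \<phi> x :> v"
  shows "((\<lambda>t. (\<phi> (x + t *\<^sub>R d) - \<phi> x) / t) \<longlongrightarrow> d \<bullet> v) (at_right 0)"
proof -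
  have "((\<lambda>t. x + t *\<^sub>R d) has_derivative (\<lambda>t. t *\<^sub>R d)) (at 0)"
    by (auto intro!: derivative_eq_intros)
  from diff_chain_at[OF this, of \<phi> "\<lambda>h. h \<bullet> v"]
  have "((\<lambda>t. \<phi> (x + t *\<^sub>R d)) has_derivative (\<lambda>t. (t *\<^sub>R d) \<bullet> v)) (at 0)"
    using assms unfolding gderiv_def o_def by simp
  then have "((\<lambda>t. \<phi> (x + t *\<^sub>R d)) has_field_derivative d \<bullet> v) (at 0)"
    unfolding has_field_derivative_def by (simp add: mult.commute[of _ "d \<bullet> v"])
  then have "((\<lambda>t. \<phi> (x + t *\<^sub>R d)) has_field_derivative d \<bullet> v) (at 0 within {0<..})"
    by (rule has_field_derivative_at_within)
  then show ?thesis unfolding has_field_derivative_iff by simp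
qed

lemma gderiv_tendsto_penalty_dir_quotient:
  fixes \<phi> :: "'a::real_inner \<Rightarrow> real"
  assumes "GDERIV \<phi> x :> v"
  shows "((\<lambda>t. (penalty k (\<phi> (x + t *\<^sub>R d)) - penalty k (\<phi> x)) / t) \<longlongrightarrow>
           max (subdiff_lo k (\<phi> x) * (d \<bullet> v)) (subdiff_hi k (\<phi> x) * (d \<bullet> v))) (at_right 0)"
proof -
  note quotient = gderiv_tendsto_dir_quotient[OF assms, of d]
  show ?thesis
  proof (cases "\<phi> x = 0")
    case True
    have "eventually (\<lambda>t. max (subdiff_lo k 0 * ((\<phi> (x + t *\<^sub>R d) - \<phi> x) / t))
                              (subdiff_hi k 0 * ((\<phi> (x + t *\<^sub>R d) - \<phi> x) / t))
            = (penalty k (\<phi> (x + t *\<^sub>R d)) - penalty k (\<phi> x)) / t) (at_right 0)"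
      using eventually_at_right_less[of 0]
      by eventually_elim (simp add: True penalty_eq_max_subdiff_0 max_def field_simps)
    moreover have "((\<lambda>t. max (subdiff_lo k 0 * ((\<phi> (x + t *\<^sub>R d) - \<phi> x) / t))
                              (subdiff_hi k 0 * ((\<phi> (x + t *\<^sub>R d) - \<phi> x) / t)))
            \<longlongrightarrow> max (subdiff_lo k 0 * (d \<bullet> v)) (subdiff_hi k 0 * (d \<bullet> v))) (at_right 0)"
      using quotient by (intro tendsto_intros)
    ultimately show ?thesis using True by (simp add: Lim_transform_eventually)
  next
    case False
    have "isCont \<phi> x" using assms unfolding gderiv_def by (rule has_derivative_continuous)
    moreover have "((\<lambda>t::real. x + t *\<^sub>R d) \<longlongrightarrow> x) (at_right 0)"
      by (auto intro!: tendsto_eq_intros)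
    ultimately have "((\<lambda>t. \<phi> (x + t *\<^sub>R d)) \<longlongrightarrow> \<phi> x) (at_right 0)"
      by (rule isCont_tendsto_compose)
    then have "eventually (\<lambda>t. 0 < \<phi> x * \<phi> (x + t *\<^sub>R d)) (at_right 0)"
      using False by (rule tendsto_same_sign)
    then have "eventually (\<lambda>t. subdiff_lo k (\<phi> x) * ((\<phi> (x + t *\<^sub>R d) - \<phi> x) / t)
            = (penalty k (\<phi> (x + t *\<^sub>R d)) - penalty k (\<phi> x)) / t) (at_right 0)"
      by eventually_elim (simp add: penalty_diff_same_sign)
    moreover have "((\<lambda>t. subdiff_lo k (\<phi> x) * ((\<phi> (x + t *\<^sub>R d) - \<phi> x) / t))
            \<longlongrightarrow> subdiff_lo k (\<phi> x) * (d \<bullet> v)) (at_right 0)"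
      using quotient by (intro tendsto_intros)
    moreover have "subdiff_hi k (\<phi> x) = subdiff_lo k (\<phi> x)"
      using False by (rule subdiff_hi_eq_lo)
    ultimately show ?thesis by (simp add: Lim_transform_eventually)
  qed
qed

section \<open>Combinations with coefficients in intervals\<close>

lemma compact_set_sum:
  fixes A :: "'k \<Rightarrow> 'a::real_normed_vector set"
  assumes "\<And>k. k \<in> K \<Longrightarrow> compact (A k)"
  shows "compact (\<Sum>k\<in>K. A k)"
  using assms
proof (induction K rule: infinite_finite_induct)
  case (insert k K)
  have "A k + (\<Sum>k\<in>K. A k) = {x + y | x y. x \<in> A k \<and> y \<in> (\<Sum>k\<in>K. A k)}"
    by (auto simp: set_plus_def)
  then show ?case using insert by (simp add: compact_sums)
qed simp_all

lemma set_sum_scaleR_intervals: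
  fixes v :: "'k \<Rightarrow> 'a::real_vector"
  assumes "finite K"
  shows "(\<Sum>k\<in>K. (\<lambda>t. t *\<^sub>R v k) ` {lo k..hi k})
           = {\<Sum>k\<in>K. a k *\<^sub>R v k | a. \<forall>k\<in>K. lo k \<le> a k \<and> a k \<le> hi k}"
  unfolding set_sum_alt[OF assms]
proof (intro set_eqI iffI)
  fix x assume "x \<in> {sum s K |s. \<forall>k\<in>K. s k \<in> (\<lambda>t. t *\<^sub>R v k) ` {lo k..hi k}}"
  then obtain s where x: "x = sum s K" and "\<forall>k\<in>K. \<exists>t\<in>{lo k..hi k}. s k = t *\<^sub>R v k"
    by (auto simp: image_iff)
  then obtain a where "\<forall>k\<in>K. a k \<in> {lo k..hi k} \<and> s k = a k *\<^sub>R v k" by metis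
  then show "x \<in> {\<Sum>k\<in>K. a k *\<^sub>R v k | a. \<forall>k\<in>K. lo k \<le> a k \<and> a k \<le> hi k}"
    unfolding x by (auto intro!: exI[of _ a] sum.cong)
next
  fix x assume "x \<in> {\<Sum>k\<in>K. a k *\<^sub>R v k | a. \<forall>k\<in>K. lo k \<le> a k \<and> a k \<le> hi k}"
  then obtain a where "x = (\<Sum>k\<in>K. a k *\<^sub>R v k)" and "\<forall>k\<in>K. lo k \<le> a k \<and> a k \<le> hi k"
    by blast
  then show "x \<in> {sum s K |s. \<forall>k\<in>K. s k \<in> (\<lambda>t. t *\<^sub>R v k) ` {lo k..hi k}}"
    by (auto intro!: exI[of _ "\<lambda>k. a k *\<^sub>R v k"])
qed

(* The hypothesis says that the support function of the set of combinations
   sum_k a_k v_k with a_k in [lo k, hi k] dominates that of the point -c. *)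
lemma zero_in_box_combination:
  fixes c :: "'a::euclidean_space" and v :: "'k \<Rightarrow> 'a"
  assumes "finite K" and "\<forall>k\<in>K. lo k \<le> hi k"
    and support: "\<forall>d. 0 \<le> c \<bullet> d + (\<Sum>k\<in>K. max (lo k * (v k \<bullet> d)) (hi k * (v k \<bullet> d)))"
  obtains a where "\<forall>k\<in>K. lo k \<le> a k \<and> a k \<le> hi k" and "c + (\<Sum>k\<in>K. a k *\<^sub>R v k) = 0"
proof -
  define B where "B = (\<Sum>k\<in>K. (\<lambda>t. t *\<^sub>R v k) ` {lo k..hi k})"
  have B_eq: "B = {\<Sum>k\<in>K. a k *\<^sub>R v k | a. \<forall>k\<in>K. lo k \<le> a k \<and> a k \<le> hi k}"
    unfolding B_def using \<open>finite K\<close> by (rule set_sum_scaleR_intervals)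
  have "- c \<in> B"
  proof (rule ccontr)
    assume "- c \<notin> B"
    moreover have "convex B" unfolding B_def
      by (intro convex_set_sum convex_linear_image linear_scaleR_left convex_real_interval)
    moreover have "closed B" unfolding B_def
      by (intro compact_imp_closed compact_set_sum compact_continuous_image continuous_intros) auto
    ultimately obtain d b where db: "d \<bullet> (- c) < b" "\<forall>x\<in>B. b < d \<bullet> x"
      using separating_hyperplane_closed_point by blast
    define a where "a k = (if hi k * (v k \<bullet> d) \<le> lo k * (v k \<bullet> d) then hi k else lo k)" for k
    have "\<forall>k\<in>K. lo k \<le> a k \<and> a k \<le> hi k" using assms(2) by (simp add: a_def)
    then have "(\<Sum>k\<in>K. a k *\<^sub>R v k) \<in> B" unfolding B_eq by blast
    moreover have "(\<Sum>k\<in>K. a k *\<^sub>R v k) \<bullet> (- d)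
        = (\<Sum>k\<in>K. max (lo k * (v k \<bullet> - d)) (hi k * (v k \<bullet> - d)))"
      unfolding inner_sum_left a_def by (intro sum.cong) (auto simp: max_def)
    ultimately show False using db support[rule_format, of "- d"] by (auto simp: inner_commute)
  qed
  then obtain a where "\<forall>k\<in>K. lo k \<le> a k \<and> a k \<le> hi k" and "- c = (\<Sum>k\<in>K. a k *\<^sub>R v k)"
    unfolding B_eq by blast
  then show thesis using that[of a] by (metis add.right_inverse)
qed

section \<open>The optimality condition\<close>

definition opt_cond_sum :: "('a::real_inner \<Rightarrow> real) \<Rightarrow> ('i + 'j \<Rightarrow> 'a \<Rightarrow> real) \<Rightarrow> ('i + 'j) set
     \<Rightarrow> real \<Rightarrow> 'a \<Rightarrow> ('i + 'j \<Rightarrow> real) \<Rightarrow> bool" where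
  "opt_cond_sum f c K \<rho> x a \<longleftrightarrow>
     grad f x + \<rho> *\<^sub>R (\<Sum>k\<in>K. a k *\<^sub>R grad (c k) x) = 0 \<and>
     (\<forall>k\<in>K. subdiff_lo k (c k x) \<le> a k \<and> a k \<le> subdiff_hi k (c k x))"

lemma Ball_Plus: "(\<forall>k\<in>A <+> B. P k) \<longleftrightarrow> (\<forall>i\<in>A. P (Inl i)) \<and> (\<forall>j\<in>B. P (Inr j))"
  by auto

lemma penE_eq_sum_penalty:
  "penE f g r h s \<rho> x = f x + \<rho> * (\<Sum>k\<in>{..<r} <+> {..<s}. penalty k (case_sum g h k x))"
  by (simp add: penE_def sum.Plus o_def penalty_def distrib_left add.assoc)

lemma opt_cond_iff_opt_cond_sum:
  "opt_cond f g r h s \<rho> x sc tc \<longleftrightarrow>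
     opt_cond_sum f (case_sum g h) ({..<r} <+> {..<s}) \<rho> x (case_sum sc tc)"
proof -
  have g: "(g i x < 0 \<longrightarrow> a = -1) \<and> (g i x = 0 \<longrightarrow> -1 \<le> a \<and> a \<le> 1) \<and> (g i x > 0 \<longrightarrow> a = 1)
      \<longleftrightarrow> subdiff_lo (Inl i) (g i x) \<le> a \<and> a \<le> subdiff_hi (Inl i) (g i x)" for i a
    by (auto simp: subdiff_lo_def subdiff_hi_def)
  have h: "(h j x < 0 \<longrightarrow> a = 0) \<and> (h j x = 0 \<longrightarrow> 0 \<le> a \<and> a \<le> 1) \<and> (h j x > 0 \<longrightarrow> a = 1)
      \<longleftrightarrow> subdiff_lo (Inr j) (h j x) \<le> a \<and> a \<le> subdiff_hi (Inr j) (h j x)" for j a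
    by (auto simp: subdiff_lo_def subdiff_hi_def)
  show ?thesis
    unfolding opt_cond_def opt_cond_sum_def Ball_Plus sum.case g[symmetric] h[symmetric]
    by (simp add: sum.Plus o_def scaleR_add_right add.assoc Ball_def)
qed

lemma minimizer_dir_deriv_nonneg:
  fixes f :: "'a::real_inner \<Rightarrow> real" and c :: "'i + 'j \<Rightarrow> 'a \<Rightarrow> real"
  assumes df: "GDERIV f x :> grad f x" and dc: "\<forall>k\<in>K. GDERIV (c k) x :> grad (c k) x"
    and min: "is_minimizer (\<lambda>y. f y + \<rho> * (\<Sum>k\<in>K. penalty k (c k y))) x"
  shows "0 \<le> d \<bullet> grad f x + \<rho> * (\<Sum>k\<in>K. max (subdiff_lo k (c k x) * (d \<bullet> grad (c k) x))
                                             (subdiff_hi k (c k x) * (d \<bullet> grad (c k) x)))"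
proof -
  let ?Q = "\<lambda>t. (f (x + t *\<^sub>R d) - f x) / t
                + \<rho> * (\<Sum>k\<in>K. (penalty k (c k (x + t *\<^sub>R d)) - penalty k (c k x)) / t)"
  have "eventually (\<lambda>t. 0 \<le> ?Q t) (at_right 0)"
    using eventually_at_right_less[of 0]
  proof eventually_elim
    case (elim t)
    have "0 \<le> (f (x + t *\<^sub>R d) + \<rho> * (\<Sum>k\<in>K. penalty k (c k (x + t *\<^sub>R d)))
               - (f x + \<rho> * (\<Sum>k\<in>K. penalty k (c k x)))) / t"
      using min elim unfolding is_minimizer_def by simp
    also have "\<dots> = ?Q t"
      using elim by (simp add: sum_divide_distrib[symmetric] sum_subtractf field_simps)
    finally show ?case .
  qed
  moreover have "(?Q \<longlongrightarrow> d \<bullet> grad f x + \<rho> * (\<Sum>k\<in>K. max (subdiff_lo k (c k x) * (d \<bullet> grad (c k) x))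
                                                   (subdiff_hi k (c k x) * (d \<bullet> grad (c k) x))))
      (at_right 0)"
    using df dc
    by (intro tendsto_intros gderiv_tendsto_dir_quotient gderiv_tendsto_penalty_dir_quotient) auto
  ultimately show ?thesis by (intro tendsto_lowerbound) auto
qed

lemma minimizer_imp_opt_cond_sum:
  fixes f :: "'a::euclidean_space \<Rightarrow> real" and c :: "'i + 'j \<Rightarrow> 'a \<Rightarrow> real"
  assumes "finite K" and "0 < \<rho>"
    and "GDERIV f x :> grad f x" and "\<forall>k\<in>K. GDERIV (c k) x :> grad (c k) x"
    and "is_minimizer (\<lambda>y. f y + \<rho> * (\<Sum>k\<in>K. penalty k (c k y))) x"
  shows "\<exists>a. opt_cond_sum f c K \<rho> x a"
proof -
  let ?lo = "\<lambda>k. subdiff_lo k (c k x)" and ?hi = "\<lambda>k. subdiff_hi k (c k x)"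
  have support: "\<forall>d. 0 \<le> ((1 / \<rho>) *\<^sub>R grad f x) \<bullet> d
            + (\<Sum>k\<in>K. max (?lo k * (grad (c k) x \<bullet> d)) (?hi k * (grad (c k) x \<bullet> d)))"
    using minimizer_dir_deriv_nonneg[OF assms(3-5)] \<open>0 < \<rho>\<close>
    by (simp add: inner_commute divide_simps algebra_simps)
  then obtain a where a: "\<forall>k\<in>K. ?lo k \<le> a k \<and> a k \<le> ?hi k"
    and "(1 / \<rho>) *\<^sub>R grad f x + (\<Sum>k\<in>K. a k *\<^sub>R grad (c k) x) = 0"
    using zero_in_box_combination[OF \<open>finite K\<close> _ support] subdiff_lo_le_hi by blast
  then have "\<rho> *\<^sub>R ((1 / \<rho>) *\<^sub>R grad f x + (\<Sum>k\<in>K. a k *\<^sub>R grad (c k) x)) = 0" by simp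
  then have "grad f x + \<rho> *\<^sub>R (\<Sum>k\<in>K. a k *\<^sub>R grad (c k) x) = 0"
    using \<open>0 < \<rho>\<close> by (simp add: scaleR_add_right)
  with a show ?thesis unfolding opt_cond_sum_def by blast
qed

section \<open>Uniqueness and continuity of the coefficients\<close>

lemma independent_dual_vector:
  fixes V :: "'k \<Rightarrow> 'a::euclidean_space"
  assumes inj: "inj_on V A" and indep: "independent (V ` A)" and "l \<in> A"
  obtains e where "\<forall>k\<in>A. e \<bullet> V k = (if k = l then 1 else 0)"
proof -
  define W where "W = V ` A - {V l}"
  have "V l \<notin> span W"
    using indep \<open>l \<in> A\<close> unfolding W_def dependent_def by blast
  obtain y z where y: "y \<in> span W" and z: "\<And>w. w \<in> span W \<Longrightarrow> z \<bullet> w = 0" and "V l = y + z"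
    using orthogonal_subspace_decomp_exists[of W "V l"] unfolding orthogonal_def by metis
  have "z \<noteq> 0" using \<open>V l \<notin> span W\<close> y \<open>V l = y + z\<close> by auto
  have "(z /\<^sub>R (z \<bullet> z)) \<bullet> V k = (if k = l then 1 else 0)" if "k \<in> A" for k
  proof (cases "k = l")
    case True
    then show ?thesis using z[OF y] \<open>V l = y + z\<close> \<open>z \<noteq> 0\<close> by (simp add: inner_add_right)
  next
    case False
    then have "V k \<in> span W"
      using inj \<open>k \<in> A\<close> \<open>l \<in> A\<close> unfolding W_def by (auto intro: span_base dest: inj_onD)
    then show ?thesis using z False by simp
  qed
  then show thesis using that by blast
qed

lemma inner_dual_vector_sum:
  fixes V W :: "'k \<Rightarrow> 'a::real_inner"
  assumes "finite K" and "A \<subseteq> K" and "l \<in> A"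
    and dual: "\<forall>k\<in>A. e \<bullet> W k = (if k = l then 1 else 0)"
  shows "e \<bullet> (\<Sum>k\<in>K. a k *\<^sub>R V k)
           = a l + (\<Sum>k\<in>K - A. a k * (e \<bullet> V k)) + (\<Sum>k\<in>A. a k * (e \<bullet> (V k - W k)))"
proof -
  have "e \<bullet> (\<Sum>k\<in>K. a k *\<^sub>R V k) = (\<Sum>k\<in>K - A. a k * (e \<bullet> V k)) + (\<Sum>k\<in>A. a k * (e \<bullet> V k))"
    using sum.subset_diff[OF assms(2,1)] by (simp add: inner_sum_right)
  also have "(\<Sum>k\<in>A. a k * (e \<bullet> V k)) = (\<Sum>k\<in>A. a k * (e \<bullet> (V k - W k))) + (\<Sum>k\<in>A. a k * (e \<bullet> W k))"
    by (simp add: sum.distrib[symmetric] inner_diff_right algebra_simps)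
  also have "(\<Sum>k\<in>A. a k * (e \<bullet> W k)) = (\<Sum>k\<in>A. if k = l then a l else 0)"
    using dual by (intro sum.cong) auto
  also have "\<dots> = a l"
    using \<open>l \<in> A\<close> finite_subset[OF assms(2,1)] by simp
  finally show ?thesis by simp
qed

lemma sum_coefficients_unique:
  fixes V :: "'k \<Rightarrow> 'a::euclidean_space"
  assumes "finite K" and "A \<subseteq> K" and "inj_on V A" and "independent (V ` A)"
    and sums: "(\<Sum>k\<in>K. a k *\<^sub>R V k) = (\<Sum>k\<in>K. b k *\<^sub>R V k)"
    and outside: "\<forall>k\<in>K - A. a k = b k"
  shows "\<forall>k\<in>K. a k = b k"
proof
  fix l assume "l \<in> K"
  show "a l = b l"
  proof (cases "l \<in> A")
    case True
    then obtain e where e: "\<forall>k\<in>A. e \<bullet> V k = (if k = l then 1 else 0)"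
      using independent_dual_vector[OF assms(3,4) True] by blast
    have "(\<Sum>k\<in>K - A. a k * (e \<bullet> V k)) = (\<Sum>k\<in>K - A. b k * (e \<bullet> V k))"
      using outside by (intro sum.cong) auto
    then show ?thesis
      using sums inner_dual_vector_sum[OF assms(1,2) True e, of a V]
        inner_dual_vector_sum[OF assms(1,2) True e, of b V] by simp
  qed (use outside \<open>l \<in> K\<close> in auto)
qed

lemma sum_coefficients_tendsto:
  fixes V :: "'b \<Rightarrow> 'k \<Rightarrow> 'a::euclidean_space"
  assumes "finite K" and "A \<subseteq> K" and "inj_on V0 A" and "independent (V0 ` A)"
    and sums: "eventually (\<lambda>t. (\<Sum>k\<in>K. C t k *\<^sub>R V t k) = R t) F"
    and sum0: "(\<Sum>k\<in>K. C0 k *\<^sub>R V0 k) = R0"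
    and lim_V: "\<forall>k\<in>K. ((\<lambda>t. V t k) \<longlongrightarrow> V0 k) F" and lim_R: "(R \<longlongrightarrow> R0) F"
    and bounded: "\<forall>k\<in>A. eventually (\<lambda>t. \<bar>C t k\<bar> \<le> M) F"
    and outside: "\<forall>k\<in>K - A. ((\<lambda>t. C t k) \<longlongrightarrow> C0 k) F"
  shows "\<forall>k\<in>K. ((\<lambda>t. C t k) \<longlongrightarrow> C0 k) F"
proof
  fix l assume "l \<in> K"
  show "((\<lambda>t. C t l) \<longlongrightarrow> C0 l) F"
  proof (cases "l \<in> A")
    case True
    then obtain e where e: "\<forall>k\<in>A. e \<bullet> V0 k = (if k = l then 1 else 0)"
      using independent_dual_vector[OF assms(3,4) True] by blast
    let ?rest = "\<lambda>t. \<Sum>k\<in>K - A. C t k * (e \<bullet> V t k)"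
    let ?err = "\<lambda>t. \<Sum>k\<in>A. C t k * (e \<bullet> (V t k - V0 k))"
    have err: "(?err \<longlongrightarrow> 0) F"
    proof (rule tendsto_null_sum)
      fix k assume "k \<in> A"
      have "((\<lambda>t. e \<bullet> (V t k - V0 k)) \<longlongrightarrow> e \<bullet> (V0 k - V0 k)) F"
        using lim_V \<open>k \<in> A\<close> assms(2) by (intro tendsto_intros) auto
      then show "((\<lambda>t. C t k * (e \<bullet> (V t k - V0 k))) \<longlongrightarrow> 0) F"
        using bounded \<open>k \<in> A\<close> by (intro lim_null_mult_left_bounded[where B=M]) auto
    qed
    have rest: "(?rest \<longlongrightarrow> (\<Sum>k\<in>K - A. C0 k * (e \<bullet> V0 k))) F"
      using lim_V outside by (intro tendsto_intros) auto
    have "((\<lambda>t. e \<bullet> R t - ?rest t - ?err t)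
        \<longlongrightarrow> e \<bullet> R0 - (\<Sum>k\<in>K - A. C0 k * (e \<bullet> V0 k)) - 0) F"
      using tendsto_diff[OF tendsto_diff[OF tendsto_inner[OF tendsto_const lim_R] rest] err] .
    moreover have "e \<bullet> R0 - (\<Sum>k\<in>K - A. C0 k * (e \<bullet> V0 k)) - 0 = C0 l"
      using inner_dual_vector_sum[OF assms(1,2) True e, of C0 V0] sum0 by simp
    moreover have "eventually (\<lambda>t. e \<bullet> R t - ?rest t - ?err t = C t l) F"
      using sums
    proof eventually_elim
      case (elim t)
      then show ?case using inner_dual_vector_sum[OF assms(1,2) True e, of "C t" "V t"] by simp
    qed
    ultimately show ?thesis by (simp add: Lim_transform_eventually)
  qed (use outside \<open>l \<in> K\<close> in auto)
qed

lemma opt_cond_sum_sum_eq: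
  assumes "opt_cond_sum f c K \<rho> x a" and "0 < \<rho>"
  shows "(\<Sum>k\<in>K. a k *\<^sub>R grad (c k) x) = - (1 / \<rho>) *\<^sub>R grad f x"
proof -
  have "\<rho> *\<^sub>R (\<Sum>k\<in>K. a k *\<^sub>R grad (c k) x) = - grad f x"
    using assms(1) unfolding opt_cond_sum_def by (simp add: eq_neg_iff_add_eq_0 add.commute)
  then have "(1 / \<rho>) *\<^sub>R \<rho> *\<^sub>R (\<Sum>k\<in>K. a k *\<^sub>R grad (c k) x) = (1 / \<rho>) *\<^sub>R - grad f x"
    by simp
  then show ?thesis using \<open>0 < \<rho>\<close> by simp
qed

lemma opt_cond_sum_inactive:
  assumes "opt_cond_sum f c K \<rho> x a" and "k \<in> K" and "c k x \<noteq> 0"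
  shows "a k = subdiff_lo k (c k x)"
proof -
  have "subdiff_hi k (c k x) = subdiff_lo k (c k x)"
    using assms(3) by (rule subdiff_hi_eq_lo)
  then show ?thesis using assms(1,2) unfolding opt_cond_sum_def by fastforce
qed

lemma opt_cond_sum_bounded:
  assumes "opt_cond_sum f c K \<rho> x a" and "k \<in> K"
  shows "\<bar>a k\<bar> \<le> 1"
  using assms subdiff_bounded[of k "c k x"] unfolding opt_cond_sum_def by fastforce

lemma opt_cond_sum_unique:
  fixes f :: "'a::euclidean_space \<Rightarrow> real"
  assumes "finite K" and "0 < \<rho>"
    and a: "opt_cond_sum f c K \<rho> x a" and b: "opt_cond_sum f c K \<rho> x b"
    and "inj_on (\<lambda>k. grad (c k) x) {k\<in>K. c k x = 0}"
    and "independent ((\<lambda>k. grad (c k) x) ` {k\<in>K. c k x = 0})"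
  shows "\<forall>k\<in>K. a k = b k"
proof (rule sum_coefficients_unique[OF \<open>finite K\<close> _ assms(5,6)])
  show "(\<Sum>k\<in>K. a k *\<^sub>R grad (c k) x) = (\<Sum>k\<in>K. b k *\<^sub>R grad (c k) x)"
    using opt_cond_sum_sum_eq[OF a \<open>0 < \<rho>\<close>] opt_cond_sum_sum_eq[OF b \<open>0 < \<rho>\<close>] by simp
  show "\<forall>k\<in>K - {k\<in>K. c k x = 0}. a k = b k"
    using opt_cond_sum_inactive[OF a] opt_cond_sum_inactive[OF b] by auto
qed auto

lemma opt_cond_sum_inactive_eventually_eq:
  assumes "k \<in> K" and "c k x0 \<noteq> 0" and "((\<lambda>\<rho>. c k (X \<rho>)) \<longlongrightarrow> c k x0) F"
    and opt: "eventually (\<lambda>\<rho>. opt_cond_sum f c K \<rho> (X \<rho>) (a \<rho>)) F"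
    and opt0: "opt_cond_sum f c K \<rho>0 x0 a0"
  shows "eventually (\<lambda>\<rho>. a \<rho> k = a0 k) F"
proof -
  have "eventually (\<lambda>\<rho>. 0 < c k x0 * c k (X \<rho>)) F"
    using assms(3,2) by (rule tendsto_same_sign)
  with opt show ?thesis
  proof eventually_elim
    case (elim \<rho>)
    then have "c k (X \<rho>) \<noteq> 0" by auto
    then show ?case
      using elim \<open>k \<in> K\<close> \<open>c k x0 \<noteq> 0\<close> opt_cond_sum_inactive[OF opt0] opt_cond_sum_inactive[OF elim(1)]
        subdiff_lo_same_sign[OF elim(2)] by auto
  qed
qed

lemma opt_cond_sum_tendsto:
  fixes f :: "'a::euclidean_space \<Rightarrow> real" and X :: "real \<Rightarrow> 'a"
  assumes "finite K" and f: "has_continuous_grad f" and c: "\<forall>k\<in>K. has_continuous_grad (c k)"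
    and "0 < \<rho>0" and lim_\<rho>: "((\<lambda>\<rho>. \<rho>) \<longlongrightarrow> \<rho>0) F" and lim_X: "(X \<longlongrightarrow> x0) F"
    and opt: "eventually (\<lambda>\<rho>. opt_cond_sum f c K \<rho> (X \<rho>) (a \<rho>)) F"
    and opt0: "opt_cond_sum f c K \<rho>0 x0 a0"
    and "inj_on (\<lambda>k. grad (c k) x0) {k\<in>K. c k x0 = 0}"
    and "independent ((\<lambda>k. grad (c k) x0) ` {k\<in>K. c k x0 = 0})"
  shows "\<forall>k\<in>K. ((\<lambda>\<rho>. a \<rho> k) \<longlongrightarrow> a0 k) F"
proof (rule sum_coefficients_tendsto[OF \<open>finite K\<close> _ assms(9,10), where M=1])
  have "eventually (\<lambda>\<rho>. 0 < \<rho>) F" using lim_\<rho> \<open>0 < \<rho>0\<close> by (rule order_tendstoD)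
  with opt show "eventually (\<lambda>\<rho>. (\<Sum>k\<in>K. a \<rho> k *\<^sub>R grad (c k) (X \<rho>)) = - (1 / \<rho>) *\<^sub>R grad f (X \<rho>)) F"
    by eventually_elim (rule opt_cond_sum_sum_eq)
  show "(\<Sum>k\<in>K. a0 k *\<^sub>R grad (c k) x0) = - (1 / \<rho>0) *\<^sub>R grad f x0"
    using opt0 \<open>0 < \<rho>0\<close> by (rule opt_cond_sum_sum_eq)
  show "\<forall>k\<in>K. ((\<lambda>\<rho>. grad (c k) (X \<rho>)) \<longlongrightarrow> grad (c k) x0) F"
    using c lim_X by (blast intro: isCont_tendsto_compose has_continuous_grad_imp_isCont_grad)
  show "((\<lambda>\<rho>. - (1 / \<rho>) *\<^sub>R grad f (X \<rho>)) \<longlongrightarrow> - (1 / \<rho>0) *\<^sub>R grad f x0) F"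
    using \<open>0 < \<rho>0\<close> lim_\<rho> isCont_tendsto_compose[OF has_continuous_grad_imp_isCont_grad[OF f] lim_X]
    by (intro tendsto_intros) auto
  show "\<forall>k\<in>{k\<in>K. c k x0 = 0}. eventually (\<lambda>\<rho>. \<bar>a \<rho> k\<bar> \<le> 1) F"
    using opt by (auto elim: eventually_mono intro: opt_cond_sum_bounded)
  show "\<forall>k\<in>K - {k\<in>K. c k x0 = 0}. ((\<lambda>\<rho>. a \<rho> k) \<longlongrightarrow> a0 k) F"
  proof
    fix k assume k: "k \<in> K - {k\<in>K. c k x0 = 0}"
    have "((\<lambda>\<rho>. c k (X \<rho>)) \<longlongrightarrow> c k x0) F"
      using c k lim_X by (blast intro: isCont_tendsto_compose has_continuous_grad_imp_isCont)
    then have "eventually (\<lambda>\<rho>. a \<rho> k = a0 k) F"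
      using k opt opt0 by (intro opt_cond_sum_inactive_eventually_eq) auto
    then show "((\<lambda>\<rho>. a \<rho> k) \<longlongrightarrow> a0 k) F" by (rule tendsto_eventually)
  qed
qed auto

section \<open>Minimizers of linearly perturbed strictly convex functions\<close>

lemma strictly_convex_on_imp_convex_on:
  assumes "strictly_convex_on S F"
  shows "convex_on S F"
proof (rule convex_onI)
  show "convex S" using assms unfolding strictly_convex_on_def by blast
  fix t :: real and x y assume "0 < t" "t < 1" "x \<in> S" "y \<in> S"
  then show "F ((1 - t) *\<^sub>R x + t *\<^sub>R y) \<le> (1 - t) * F x + t * F y"
    using assms unfolding strictly_convex_on_def
    by (cases "x = y") (auto simp: scaleR_collapse algebra_simps less_imp_le)
qed

lemma strictly_convex_minimizer_unique:
  assumes "strictly_convex_on UNIV F" and "is_minimizer F x" and "is_minimizer F y"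
  shows "x = y"
proof (rule ccontr)
  assume "x \<noteq> y"
  then have "\<forall>u. 0 < u \<and> u < 1 \<longrightarrow> F ((1 - u) *\<^sub>R x + u *\<^sub>R y) < (1 - u) * F x + u * F y"
    using assms(1) unfolding strictly_convex_on_def by blast
  from spec[OF this, of "1/2"]
  have "F ((1/2) *\<^sub>R x + (1/2) *\<^sub>R y) < F x / 2 + F y / 2" by simp
  moreover have "F x \<le> F y" "F y \<le> F x" "F x \<le> F ((1/2) *\<^sub>R x + (1/2) *\<^sub>R y)"
    using assms(2,3) unfolding is_minimizer_def by auto
  ultimately show False by linarith
qed

lemma coercive_imp_has_minimizer:
  fixes F :: "'a::euclidean_space \<Rightarrow> real"
  assumes "continuous_on UNIV F" and "coercive F"
  obtains x where "is_minimizer F x"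
proof -
  have "eventually (\<lambda>x. F 0 < F x) at_infinity"
    using assms(2) unfolding coercive_def by (simp add: filterlim_at_top_dense)
  then obtain R where R: "\<And>x. R \<le> norm x \<Longrightarrow> F 0 < F x"
    unfolding eventually_at_infinity by blast
  obtain z where z: "z \<in> cball 0 \<bar>R\<bar>" "\<forall>y\<in>cball 0 \<bar>R\<bar>. F z \<le> F y"
    using continuous_attains_inf[OF compact_cball _ continuous_on_subset[OF assms(1)], of 0 "\<bar>R\<bar>"]
    by auto
  have "F z \<le> F y" for y
  proof (cases "y \<in> cball 0 \<bar>R\<bar>")
    case False
    then have "F 0 < F y" by (intro R) auto
    moreover have "F z \<le> F 0" using z by auto
    ultimately show ?thesis by linarith
  qed (use z in blast)
  then show thesis using that unfolding is_minimizer_def by blast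
qed

lemma strictly_convex_gap_on_sphere:
  fixes F :: "'a::euclidean_space \<Rightarrow> real"
  assumes "strictly_convex_on UNIV F" and "continuous_on UNIV F" and "is_minimizer F x0"
    and "0 < \<epsilon>"
  obtains \<delta> where "0 < \<delta>" and "\<forall>y. dist y x0 = \<epsilon> \<longrightarrow> F x0 + \<delta> \<le> F y"
proof -
  have "sphere x0 \<epsilon> \<noteq> {}" using \<open>0 < \<epsilon>\<close> by simp
  then obtain y0 where y0: "y0 \<in> sphere x0 \<epsilon>" and min_y0: "\<forall>y\<in>sphere x0 \<epsilon>. F y0 \<le> F y"
    using continuous_attains_inf[OF compact_sphere _ continuous_on_subset[OF assms(2) subset_UNIV]]
    by blast
  have "F x0 < F y0"
  proof (rule ccontr)
    assume "\<not> F x0 < F y0"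
    then have "is_minimizer F y0"
      using assms(3) unfolding is_minimizer_def by (meson not_le order_trans)
    then have "y0 = x0" using strictly_convex_minimizer_unique assms(1,3) by blast
    then show False using y0 \<open>0 < \<epsilon>\<close> by simp
  qed
  then show thesis
    using min_y0 by (intro that[of "F y0 - F x0"]) (auto simp: dist_commute)
qed

lemma convex_on_less_beyond_sphere:
  fixes F :: "'a::real_normed_vector \<Rightarrow> real"
  assumes "convex_on UNIV F" and "0 < \<epsilon>" and sphere: "\<forall>y. dist y x0 = \<epsilon> \<longrightarrow> F x0 < F y"
    and "\<epsilon> \<le> dist x x0"
  shows "F x0 < F x"
proof -
  define t where "t = \<epsilon> / dist x x0"
  have "0 < dist x x0" using assms(2,4) by linarith
  then have t: "0 < t" "t \<le> 1" using assms(4) by (auto simp: t_def divide_le_eq_1 \<open>0 < \<epsilon>\<close>)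
  define y where "y = (1 - t) *\<^sub>R x0 + t *\<^sub>R x"
  have "dist y x0 = t * dist x x0"
    unfolding y_def dist_norm using t by (simp add: algebra_simps flip: scaleR_diff_right)
  also have "\<dots> = \<epsilon>" using \<open>0 < dist x x0\<close> by (simp add: t_def)
  finally have "F x0 < F y" using sphere by blast
  also have "F y \<le> (1 - t) * F x0 + t * F x"
    using convex_onD[OF assms(1)] t unfolding y_def by simp
  finally show ?thesis using t by (simp add: algebra_simps)
qed

lemma perturbed_gap_on_sphere:
  fixes G P :: "'a::metric_space \<Rightarrow> real"
  assumes gap: "\<forall>y. dist y x0 = \<epsilon> \<longrightarrow> G x0 + \<delta> \<le> G y" and "0 \<le> \<epsilon>"
    and bound: "\<forall>y\<in>cball x0 \<epsilon>. \<bar>P y\<bar> \<le> M" and small: "2 * (\<bar>t\<bar> * M) < \<delta>"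
  shows "\<forall>y. dist y x0 = \<epsilon> \<longrightarrow> G x0 + t * P x0 < G y + t * P y"
proof (intro allI impI)
  fix y assume "dist y x0 = \<epsilon>"
  have "\<bar>t * P z\<bar> \<le> \<bar>t\<bar> * M" if "z \<in> cball x0 \<epsilon>" for z
    using bound that by (simp add: abs_mult mult_left_mono)
  then have "\<bar>t * P y\<bar> \<le> \<bar>t\<bar> * M" and "\<bar>t * P x0\<bar> \<le> \<bar>t\<bar> * M"
    using \<open>dist y x0 = \<epsilon>\<close> \<open>0 \<le> \<epsilon>\<close> by (auto simp: dist_commute)
  then show "G x0 + t * P x0 < G y + t * P y"
    using gap \<open>dist y x0 = \<epsilon>\<close> small by fastforce
qed

lemma minimizer_continuous_linear_perturbation:
  fixes F :: "real \<Rightarrow> 'a::euclidean_space \<Rightarrow> real" and X :: "real \<Rightarrow> 'a"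
  assumes min: "\<forall>\<rho>\<in>I. is_minimizer (F \<rho>) (X \<rho>)" and cvx: "\<forall>\<rho>\<in>I. convex_on UNIV (F \<rho>)"
    and "strictly_convex_on UNIV (F \<rho>0)" and "\<rho>0 \<in> I"
    and F: "\<And>\<rho> x. F \<rho> x = F \<rho>0 x + (\<rho> - \<rho>0) * P x"
    and "continuous_on UNIV (F \<rho>0)" and "continuous_on UNIV P"
  shows "continuous (at \<rho>0 within I) X"
  unfolding continuous_within_eps_delta
proof (intro allI impI)
  fix \<epsilon> :: real assume "0 < \<epsilon>"
  define x0 where "x0 = X \<rho>0"
  have "is_minimizer (F \<rho>0) x0" using min \<open>\<rho>0 \<in> I\<close> unfolding x0_def by blast
  then obtain \<delta>0 where "0 < \<delta>0" and gap: "\<forall>y. dist y x0 = \<epsilon> \<longrightarrow> F \<rho>0 x0 + \<delta>0 \<le> F \<rho>0 y"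
    using strictly_convex_gap_on_sphere[OF assms(3,6) _ \<open>0 < \<epsilon>\<close>] by blast
  have "compact (P ` cball x0 \<epsilon>)"
    by (intro compact_continuous_image continuous_on_subset[OF assms(7)]) auto
  then obtain M where "0 < M" and M: "\<forall>y\<in>cball x0 \<epsilon>. \<bar>P y\<bar> \<le> M"
    using compact_imp_bounded[of "P ` cball x0 \<epsilon>"] unfolding bounded_pos by auto
  show "\<exists>\<delta>>0. \<forall>\<rho>\<in>I. dist \<rho> \<rho>0 < \<delta> \<longrightarrow> dist (X \<rho>) (X \<rho>0) < \<epsilon>"
  proof (intro exI[of _ "\<delta>0 / (2 * M)"] conjI ballI impI)
    show "0 < \<delta>0 / (2 * M)" using \<open>0 < \<delta>0\<close> \<open>0 < M\<close> by simp
    fix \<rho> assume "\<rho> \<in> I" and "dist \<rho> \<rho>0 < \<delta>0 / (2 * M)"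
    then have small: "2 * (\<bar>\<rho> - \<rho>0\<bar> * M) < \<delta>0"
      using \<open>0 < M\<close> by (simp add: dist_real_def field_simps)
    have sphere: "\<forall>y. dist y x0 = \<epsilon> \<longrightarrow> F \<rho> x0 < F \<rho> y"
      using perturbed_gap_on_sphere[OF gap _ M small] \<open>0 < \<epsilon>\<close> unfolding F[of \<rho>] by simp
    have "\<not> \<epsilon> \<le> dist (X \<rho>) x0"
    proof
      assume "\<epsilon> \<le> dist (X \<rho>) x0"
      then have "F \<rho> x0 < F \<rho> (X \<rho>)"
        using convex_on_less_beyond_sphere[OF cvx[rule_format, OF \<open>\<rho> \<in> I\<close>] \<open>0 < \<epsilon>\<close> sphere] by blast
      moreover have "F \<rho> (X \<rho>) \<le> F \<rho> x0"
        using min \<open>\<rho> \<in> I\<close> unfolding is_minimizer_def by blast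
      ultimately show False by simp
    qed
    then show "dist (X \<rho>) (X \<rho>0) < \<epsilon>" unfolding x0_def by simp
  qed
qed

lemma active_grads_indep_iff:
  "active_grads_indep g r h s x \<longleftrightarrow>
     inj_on (\<lambda>k. grad (case_sum g h k) x) {k \<in> {..<r} <+> {..<s}. case_sum g h k x = 0} \<and>
     independent ((\<lambda>k. grad (case_sum g h k) x) ` {k \<in> {..<r} <+> {..<s}. case_sum g h k x = 0})"
proof -
  have "Inl ` {i. i < r \<and> g i x = 0} \<union> Inr ` {j. j < s \<and> h j x = 0}
      = {k \<in> {..<r} <+> {..<s}. case_sum g h k x = 0}"
    by auto
  moreover have "(\<lambda>k. case k of Inl i \<Rightarrow> grad (g i) x | Inr j \<Rightarrow> grad (h j) x)
      = (\<lambda>k. grad (case_sum g h k) x)"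
    by (auto split: sum.split)
  ultimately show ?thesis unfolding active_grads_indep_def Let_def by simp
qed

lemma penE_minimizer_unique_continuous:
  fixes f :: "'a::euclidean_space \<Rightarrow> real"
  assumes f: "continuous_on UNIV f" and c: "\<forall>k\<in>{..<r} <+> {..<s}. continuous_on UNIV (case_sum g h k)"
    and "\<rho>0 \<in> I"
    and sc: "\<forall>\<rho>\<in>I. strictly_convex_on UNIV (penE f g r h s \<rho>) \<and> coercive (penE f g r h s \<rho>)"
  shows "(\<forall>\<rho>\<in>I. \<exists>!x. is_minimizer (penE f g r h s \<rho>) x)"
    and "continuous (at \<rho>0 within I) (\<lambda>\<rho>. THE x. is_minimizer (penE f g r h s \<rho>) x)"
proof -
  define P where "P x = (\<Sum>k\<in>{..<r} <+> {..<s}. penalty k (case_sum g h k x))" for x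
  have P: "continuous_on UNIV P" unfolding P_def using c by (intro continuous_intros) auto
  have E: "penE f g r h s \<rho> x = f x + \<rho> * P x" for \<rho> x
    unfolding P_def by (rule penE_eq_sum_penalty)
  have cont: "continuous_on UNIV (penE f g r h s \<rho>)" for \<rho>
    unfolding E[abs_def] using f P by (intro continuous_intros)
  show unique: "\<forall>\<rho>\<in>I. \<exists>!x. is_minimizer (penE f g r h s \<rho>) x"
    using sc cont coercive_imp_has_minimizer strictly_convex_minimizer_unique by metis
  show "continuous (at \<rho>0 within I) (\<lambda>\<rho>. THE x. is_minimizer (penE f g r h s \<rho>) x)"
  proof (rule minimizer_continuous_linear_perturbation[OF _ _ _ \<open>\<rho>0 \<in> I\<close> _ cont P])
    show "\<forall>\<rho>\<in>I. is_minimizer (penE f g r h s \<rho>) (THE x. is_minimizer (penE f g r h s \<rho>) x)"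
      using unique by (blast intro: theI')
    show "\<forall>\<rho>\<in>I. convex_on UNIV (penE f g r h s \<rho>)"
      using sc by (blast intro: strictly_convex_on_imp_convex_on)
    show "strictly_convex_on UNIV (penE f g r h s \<rho>0)" using sc \<open>\<rho>0 \<in> I\<close> by blast
    show "penE f g r h s \<rho> x = penE f g r h s \<rho>0 x + (\<rho> - \<rho>0) * P x" for \<rho> x
      unfolding E by (simp add: algebra_simps)
  qed
qed

lemma penE_minimizer_imp_opt_cond_sum:
  fixes f :: "'a::euclidean_space \<Rightarrow> real"
  assumes "has_continuous_grad f" and "\<forall>k\<in>{..<r} <+> {..<s}. has_continuous_grad (case_sum g h k)"
    and "0 < \<rho>" and "is_minimizer (penE f g r h s \<rho>) x"
  shows "\<exists>a. opt_cond_sum f (case_sum g h) ({..<r} <+> {..<s}) \<rho> x a"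
proof (rule minimizer_imp_opt_cond_sum)
  show "is_minimizer (\<lambda>y. f y + \<rho> * (\<Sum>k\<in>{..<r} <+> {..<s}. penalty k (case_sum g h k y))) x"
    using assms(4) unfolding is_minimizer_def penE_eq_sum_penalty .
qed (use assms(1-3) in \<open>auto simp: has_continuous_grad_def\<close>)

lemma penE_opt_cond_coefficients_continuous:
  fixes f :: "'a::euclidean_space \<Rightarrow> real" and X :: "real \<Rightarrow> 'a"
  assumes f: "has_continuous_grad f" and c: "\<forall>k\<in>{..<r} <+> {..<s}. has_continuous_grad (case_sum g h k)"
    and "\<rho>0 \<in> I" and pos: "\<forall>\<rho>\<in>I. 0 < \<rho>" and min: "\<forall>\<rho>\<in>I. is_minimizer (penE f g r h s \<rho>) (X \<rho>)"
    and "continuous (at \<rho>0 within I) X" and indep: "\<forall>\<rho>\<in>I. active_grads_indep g r h s (X \<rho>)"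
  shows "\<exists>S T :: real \<Rightarrow> nat \<Rightarrow> real.
           (\<forall>\<rho>\<in>I. opt_cond f g r h s \<rho> (X \<rho>) (S \<rho>) (T \<rho>) \<and>
              (\<forall>sc tc. opt_cond f g r h s \<rho> (X \<rho>) sc tc \<longrightarrow>
                 (\<forall>i<r. sc i = S \<rho> i) \<and> (\<forall>j<s. tc j = T \<rho> j))) \<and>
           (\<forall>i<r. continuous (at \<rho>0 within I) (\<lambda>\<rho>. S \<rho> i)) \<and>
           (\<forall>j<s. continuous (at \<rho>0 within I) (\<lambda>\<rho>. T \<rho> j))"
proof -
  let ?K = "{..<r} <+> {..<s}" and ?c = "case_sum g h"
  have "\<forall>\<rho>\<in>I. \<exists>a. opt_cond_sum f ?c ?K \<rho> (X \<rho>) a"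
    using penE_minimizer_imp_opt_cond_sum[OF f c] pos min by blast
  then obtain a where a: "\<forall>\<rho>\<in>I. opt_cond_sum f ?c ?K \<rho> (X \<rho>) (a \<rho>)" by metis
  define S where "S \<rho> i = a \<rho> (Inl i)" for \<rho> i
  define T where "T \<rho> j = a \<rho> (Inr j)" for \<rho> j
  have a_eq: "case_sum (S \<rho>) (T \<rho>) = a \<rho>" for \<rho>
    by (auto simp: S_def T_def split: sum.split)
  have unique_sum: "\<forall>k\<in>?K. a \<rho> k = b k" if "\<rho> \<in> I" and b: "opt_cond_sum f ?c ?K \<rho> (X \<rho>) b" for \<rho> b
    by (rule opt_cond_sum_unique[OF _ _ _ b]) (use a pos indep that in \<open>auto simp: active_grads_indep_iff\<close>)
  have unique: "(\<forall>i<r. sc i = S \<rho> i) \<and> (\<forall>j<s. tc j = T \<rho> j)"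
    if "\<rho> \<in> I" and "opt_cond f g r h s \<rho> (X \<rho>) sc tc" for \<rho> sc tc
  proof -
    have "\<forall>k\<in>?K. a \<rho> k = case_sum sc tc k"
      using unique_sum that unfolding opt_cond_iff_opt_cond_sum by blast
    then show ?thesis unfolding Ball_Plus by (simp add: S_def T_def)
  qed
  have "\<forall>k\<in>?K. ((\<lambda>\<rho>. a \<rho> k) \<longlongrightarrow> a \<rho>0 k) (at \<rho>0 within I)"
  proof (rule opt_cond_sum_tendsto[of ?K f ?c \<rho>0 "at \<rho>0 within I" X "X \<rho>0" a "a \<rho>0"])
    show "eventually (\<lambda>\<rho>. opt_cond_sum f ?c ?K \<rho> (X \<rho>) (a \<rho>)) (at \<rho>0 within I)"
      using a by (auto simp: eventually_at_filter)
    show "(X \<longlongrightarrow> X \<rho>0) (at \<rho>0 within I)"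
      using \<open>continuous (at \<rho>0 within I) X\<close> by (simp add: continuous_within)
  qed (use f c pos a indep \<open>\<rho>0 \<in> I\<close> in \<open>auto simp: active_grads_indep_iff intro: tendsto_ident_at\<close>)
  then have "(\<forall>i<r. continuous (at \<rho>0 within I) (\<lambda>\<rho>. S \<rho> i)) \<and>
      (\<forall>j<s. continuous (at \<rho>0 within I) (\<lambda>\<rho>. T \<rho> j))"
    unfolding Ball_Plus by (simp add: continuous_within S_def T_def)
  moreover have "opt_cond f g r h s \<rho> (X \<rho>) (S \<rho>) (T \<rho>)" if "\<rho> \<in> I" for \<rho>
    using a that unfolding opt_cond_iff_opt_cond_sum a_eq by blast
  ultimately show ?thesis using unique by blast
qed

theorem lemma1:
  fixes f :: "'a::euclidean_space \<Rightarrow> real"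
    and g h :: "nat \<Rightarrow> 'a \<Rightarrow> real"
    and r s :: nat
  assumes f_cvx: "convex_on UNIV f" and f_C2: "twice_cont_diff f"
    and g_aff: "\<forall>i<r. affine_fun (g i)"
    and h_cvx: "\<forall>j<s. convex_on UNIV (h j)" and h_C2: "\<forall>j<s. twice_cont_diff (h j)"
  shows
    "(\<forall>\<rho>\<ge>0. strictly_convex_on UNIV (penE f g r h s \<rho>) \<longrightarrow>
        (\<forall>x y. is_minimizer (penE f g r h s \<rho>) x \<and> is_minimizer (penE f g r h s \<rho>) y \<longrightarrow> x = y))
   \<and>
    (\<forall>\<rho>0 (I :: real set). \<rho>0 > 0 \<and> open I \<and> is_interval I \<and> \<rho>0 \<in> I \<and> I \<subseteq> {0..} \<and>
       (\<forall>\<rho>\<in>I. strictly_convex_on UNIV (penE f g r h s \<rho>) \<and> coercive (penE f g r h s \<rho>)) \<longrightarrow>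
       (\<forall>\<rho>\<in>I. \<exists>!x. is_minimizer (penE f g r h s \<rho>) x) \<and>
       continuous (at \<rho>0 within I) (\<lambda>\<rho>. THE x. is_minimizer (penE f g r h s \<rho>) x) \<and>
       ((\<forall>\<rho>\<in>I. active_grads_indep g r h s (THE x. is_minimizer (penE f g r h s \<rho>) x)) \<longrightarrow>
          (\<exists>S T :: real \<Rightarrow> nat \<Rightarrow> real.
             (\<forall>\<rho>\<in>I.
                opt_cond f g r h s \<rho> (THE x. is_minimizer (penE f g r h s \<rho>) x) (S \<rho>) (T \<rho>) \<and>
                (\<forall>sc tc. opt_cond f g r h s \<rho> (THE x. is_minimizer (penE f g r h s \<rho>) x) sc tc \<longrightarrow>
                   (\<forall>i<r. sc i = S \<rho> i) \<and> (\<forall>j<s. tc j = T \<rho> j))) \<and>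
             (\<forall>i<r. continuous (at \<rho>0 within I) (\<lambda>\<rho>. S \<rho> i)) \<and>
             (\<forall>j<s. continuous (at \<rho>0 within I) (\<lambda>\<rho>. T \<rho> j)))))"
proof ((rule conjI; intro allI impI), goal_cases)
  case (1 \<rho> x y)
  then show ?case using strictly_convex_minimizer_unique by blast
next
  case (2 \<rho>0 I)
  then have "\<rho>0 \<in> I" and pos: "\<forall>\<rho>\<in>I. 0 < \<rho>"
    and sc: "\<forall>\<rho>\<in>I. strictly_convex_on UNIV (penE f g r h s \<rho>) \<and> coercive (penE f g r h s \<rho>)"
    using interior_maximal[of I "{0..}"] by auto
  have f: "has_continuous_grad f"
    using f_C2 by (rule twice_cont_diff_imp_has_continuous_grad)
  have c: "\<forall>k\<in>{..<r} <+> {..<s}. has_continuous_grad (case_sum g h k)"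
    using g_aff h_C2 by (auto intro: affine_fun_imp_has_continuous_grad twice_cont_diff_imp_has_continuous_grad)
  then have "\<forall>k\<in>{..<r} <+> {..<s}. continuous_on UNIV (case_sum g h k)"
    by (auto intro: has_continuous_grad_imp_continuous_on)
  note argmin = penE_minimizer_unique_continuous[OF has_continuous_grad_imp_continuous_on[OF f] this \<open>\<rho>0 \<in> I\<close> sc]
  have "\<forall>\<rho>\<in>I. is_minimizer (penE f g r h s \<rho>) (THE x. is_minimizer (penE f g r h s \<rho>) x)"
    using argmin(1) by (blast intro: theI')
  then show ?case
    using argmin penE_opt_cond_coefficients_continuous[OF f c \<open>\<rho>0 \<in> I\<close> pos _ argmin(2)] by blast
qed

end
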